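(* Let $\mathcal{H}_W,\mathcal{H}_A,\mathcal{H}_Y$ be finite-dimensional Hilbert spaces, let $|\phi\rangle\in\mathcal{H}_A$ be a unit vector, and let $\mathcal{S}_3:\mathrm{CPTP}(\mathcal{H}_W\otimes\mathcal{H}_A,\mathcal{H}_Y)\to\mathrm{CPTP}(\mathcal{H}_W,\mathcal{H}_Y)$ be the supermap $\mathcal{S}_3(\mathcal{N})(\rho)=\mathcal{N}(\rho\otimes|\phi\rangle\langle\phi|)$. Define the maps on operators on $\mathcal{H}_A$: $\mathcal{J}_1(\sigma)=|\phi\rangle\langle\phi|\sigma|\phi\rangle\langle\phi|$ and $\mathcal{J}_0(\sigma)=(\mathbb{1}_A-|\phi\rangle\langle\phi|)\sigma(\mathbb{1}_A-|\phi\rangle\langle\phi|)$, and let $\mathcal{J}=\mathcal{J}_1+\mathcal{J}_0$. Let $\Gamma\in\mathrm{CPTP}(\mathcal{H}_W\otimes\mathcal{H}_A,\mathcal{H}_Y)$ and let $\tau$ be a fixed density operator on $\mathcal{H}_W$. Define, for $\mathcal{M}\in\mathrm{CPTP}(\mathcal{H}_W,\mathcal{H}_Y)$, $$\mathcal{R}(\mathcal{M}):=\mathcal{M}\otimes(\mathrm{Tr}_A\circ\mathcal{J}_1)+\mathrm{Tr}[\mathcal{M}(\tau)]\,\Gamma\circ(\mathcal{I}_W\otimes\mathcal{J}_0),$$ i.e. $\mathcal{R}(\mathcal{M})(\rho_W\otimes\sigma_A)=\mathrm{Tr}[\mathcal{J}_1(\sigma_A)]\,\mathcal{M}(\rho_W)+\mathrm{Tr}[\mathcal{M}(\tau)]\,\Gamma(\rho_W\otimes\mathcal{J}_0(\sigma_A))$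 extended linearly. Then $\mathcal{R}$ is a superchannel from $\mathrm{CPTP}(\mathcal{H}_W,\mathcal{H}_Y)$ to $\mathrm{CPTP}(\mathcal{H}_W\otimes\mathcal{H}_A,\mathcal{H}_Y)$. Moreover, if $\Gamma\circ(\mathcal{I}_W\otimes\mathcal{J})=\Gamma$, then $\mathcal{R}(\mathcal{S}_3(\Gamma))=\Gamma$.
   Context: $\mathrm{CPTP}(\mathcal{H},\mathcal{K})$ denotes the set of quantum channels from operators on $\mathcal{H}$ to operators on $\mathcal{K}$; $\mathcal{I}_W$ is the identity channel on $\mathcal{H}_W$. A superchannel is a linear map on linear maps sending channels to channels that can be realized as $\mathcal{N}\mapsto\mathcal{E}_{\rm post}\circ(\mathcal{N}\otimes\mathcal{I}_M)\circ\mathcal{E}_{\rm pre}$ for some ancilla system $M$ and quantum channels $\mathcal{E}_{\rm pre},\mathcal{E}_{\rm post}$ (i.e. it is deterministically implementable given one black-box use of the input channel). *)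

theory Defs
  imports Main "HOL-Library.Complex_Order"
begin

text \<open>Operators on a finite-dimensional Hilbert space with orthonormal basis indexed
  by a type 'i are represented as matrices 'i => 'i => complex.  For ancilla systems
  of arbitrary finite dimension m we use the index type nat together with the
  carrier set {..<m}; therefore the basic notions are relativised to a carrier set D
  of basis indices (for the systems W, A, Y this carrier is UNIV of a finite type).\<close>

type_synonym 'i op = "'i \<Rightarrow> 'i \<Rightarrow> complex"

definition supp_on :: "'i set \<Rightarrow> 'i op \<Rightarrow> bool" where
  "supp_on D A \<longleftrightarrow> (\<forall>i j. (i \<notin> D \<or> j \<notin> D) \<longrightarrow> A i j = 0)"

definition psd_on :: "'i set \<Rightarrow> 'i op \<Rightarrow> bool" where
  "psd_on D A \<longleftrightarrow> (\<forall>v :: 'i \<Rightarrow> complex. 0 \<le> (\<Sum>i\<in>D. \<Sum>j\<in>D. cnj (v i) * A i j * v j))"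

definition trace_on :: "'i set \<Rightarrow> 'i op \<Rightarrow> complex" where
  "trace_on D A = (\<Sum>i\<in>D. A i i)"

definition lin_on :: "'i set \<Rightarrow> ('i op \<Rightarrow> 'j op) \<Rightarrow> bool" where
  "lin_on D N \<longleftrightarrow> (\<forall>A B (c::complex). supp_on D A \<longrightarrow> supp_on D B \<longrightarrow>
      N (\<lambda>i j. A i j + c * B i j) = (\<lambda>i j. N A i j + c * N B i j))"

definition tensor_id :: "nat \<Rightarrow> ('i op \<Rightarrow> 'j op) \<Rightarrow> ('i \<times> nat) op \<Rightarrow> ('j \<times> nat) op" where
  "tensor_id k N Z = (\<lambda>(y, a) (y', b). if a < k \<and> b < k
       then N (\<lambda>w w'. Z (w, a) (w', b)) y y' else 0)"

definition channel_on :: "'i set \<Rightarrow> 'j set \<Rightarrow> ('i op \<Rightarrow> 'j op) \<Rightarrow> bool" where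
  "channel_on D E N \<longleftrightarrow>
     lin_on D N \<and>
     (\<forall>A. supp_on D A \<longrightarrow> supp_on E (N A)) \<and>
     (\<forall>A. supp_on D A \<longrightarrow> trace_on E (N A) = trace_on D A) \<and>
     (\<forall>k Z. supp_on (D \<times> {..<k}) Z \<longrightarrow> psd_on (D \<times> {..<k}) Z \<longrightarrow>
            psd_on (E \<times> {..<k}) (tensor_id k N Z))"

abbreviation is_channel :: "('i op \<Rightarrow> 'j op) \<Rightarrow> bool" where
  "is_channel N \<equiv> channel_on UNIV UNIV N"

definition is_superchannel ::
  "((('x::finite) op \<Rightarrow> ('y::finite) op) \<Rightarrow> (('x2::finite) op \<Rightarrow> ('y2::finite) op)) \<Rightarrow> bool" where
  "is_superchannel S \<longleftrightarrow>
     (\<forall>N. is_channel N \<longrightarrow> is_channel (S N)) \<and>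
     (\<exists>m (Epre :: 'x2 op \<Rightarrow> ('x \<times> nat) op) (Epost :: ('y \<times> nat) op \<Rightarrow> 'y2 op).
        channel_on UNIV (UNIV \<times> {..<m}) Epre \<and>
        channel_on (UNIV \<times> {..<m}) UNIV Epost \<and>
        (\<forall>N. lin_on UNIV N \<longrightarrow> S N = (\<lambda>X. Epost (tensor_id m N (Epre X)))))"

definition mmul :: "('i::finite) op \<Rightarrow> 'i op \<Rightarrow> 'i op" where
  "mmul A B = (\<lambda>i j. \<Sum>k\<in>UNIV. A i k * B k j)"

definition idop :: "'i op" where
  "idop = (\<lambda>i j. if i = j then 1 else 0)"

definition proj :: "('i \<Rightarrow> complex) \<Rightarrow> 'i op" where
  "proj \<phi> = (\<lambda>i j. \<phi> i * cnj (\<phi> j))"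

definition kron :: "'a op \<Rightarrow> 'b op \<Rightarrow> ('a \<times> 'b) op" where
  "kron A B = (\<lambda>(a, b) (a', b'). A a a' * B b b')"

definition id_tensor :: "('a op \<Rightarrow> 'b op) \<Rightarrow> ('w \<times> 'a) op \<Rightarrow> ('w \<times> 'b) op" where
  "id_tensor F X = (\<lambda>(w, a) (w', a'). F (\<lambda>b b'. X (w, b) (w', b')) a a')"

definition ptrace2 :: "('w \<times> ('a::finite)) op \<Rightarrow> 'w op" where
  "ptrace2 X = (\<lambda>w w'. \<Sum>a\<in>UNIV. X (w, a) (w', a))"

definition unit_vec :: "('i::finite \<Rightarrow> complex) \<Rightarrow> bool" where
  "unit_vec \<phi> \<longleftrightarrow> (\<Sum>i\<in>UNIV. cnj (\<phi> i) * \<phi> i) = 1"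

definition density :: "('i::finite) op \<Rightarrow> bool" where
  "density \<tau> \<longleftrightarrow> psd_on UNIV \<tau> \<and> trace_on UNIV \<tau> = 1"

definition J1 :: "('a::finite \<Rightarrow> complex) \<Rightarrow> 'a op \<Rightarrow> 'a op" where
  "J1 \<phi> \<sigma> = mmul (mmul (proj \<phi>) \<sigma>) (proj \<phi>)"

definition J0 :: "('a::finite \<Rightarrow> complex) \<Rightarrow> 'a op \<Rightarrow> 'a op" where
  "J0 \<phi> \<sigma> = (let Q = (\<lambda>i j. idop i j - proj \<phi> i j) in mmul (mmul Q \<sigma>) Q)"

definition Jmap :: "('a::finite \<Rightarrow> complex) \<Rightarrow> 'a op \<Rightarrow> 'a op" where
  "Jmap \<phi> \<sigma> = (\<lambda>i j. J1 \<phi> \<sigma> i j + J0 \<phi> \<sigma> i j)"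

definition S3 :: "('a::finite \<Rightarrow> complex) \<Rightarrow> (('w \<times> 'a) op \<Rightarrow> 'y op) \<Rightarrow> 'w op \<Rightarrow> 'y op" where
  "S3 \<phi> N = (\<lambda>\<rho>. N (kron \<rho> (proj \<phi>)))"

definition Rmap :: "('a::finite \<Rightarrow> complex) \<Rightarrow> (('w::finite \<times> 'a) op \<Rightarrow> ('y::finite) op)
     \<Rightarrow> 'w op \<Rightarrow> ('w op \<Rightarrow> 'y op) \<Rightarrow> ('w \<times> 'a) op \<Rightarrow> 'y op" where
  "Rmap \<phi> \<Gamma> \<tau> M = (\<lambda>X. (\<lambda>i j. M (ptrace2 (id_tensor (J1 \<phi>) X)) i j
       + trace_on UNIV (M \<tau>) * \<Gamma> (id_tensor (J0 \<phi>) X) i j))"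

end

theory Submission
  imports Defs
begin

text \<open>
  For a channel M the weight Tr M(\<tau>) in R(M) equals 1, so R(M) applies M to the compression
  (I \<otimes> \<langle>\<phi>|) X (I \<otimes> |\<phi>\<rangle>) and \<Gamma> to (I \<otimes> J0) X. Since J1 + J0 is the pinching by
  |\<phi>\<rangle>\<langle>\<phi>| and its complement, the two branches together preserve the trace, and R(M) is a
  channel. R is realised with an ancilla: the pre-processing channel stores the compression in
  one ancilla block and, next to a copy of \<tau> on W, the entries of (I \<otimes> J0) X in the other
  blocks; M acts on W; the post-processing channel reads off the first block and hands the
  others, with Y traced out, to \<Gamma>. Tracing out Y is what turns M(\<tau>) into the weight Tr M(\<tau>).
  Complete positivity of every map comes from a Kraus form; preparing \<tau> needs a Gram
  decomposition \<tau> = \<Sigma>_r u_r u_r^*, obtained by Schur complements. Finally (I \<otimes> J1) X is the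
  compression of X tensored with |\<phi>\<rangle>\<langle>\<phi>|, so
  R(S3 \<Gamma>) = \<Gamma> \<circ> (I \<otimes> J1) + \<Gamma> \<circ> (I \<otimes> J0) = \<Gamma> \<circ> (I \<otimes> J) = \<Gamma>.
\<close>

section \<open>Positive semidefinite matrices\<close>

lemma psd_on_cong:
  "(\<And>i j. i \<in> D \<Longrightarrow> j \<in> D \<Longrightarrow> A i j = B i j) \<Longrightarrow> psd_on D A = psd_on D B"
  unfolding psd_on_def by (simp cong: sum.cong)

lemma psd_on_add: "psd_on D A \<Longrightarrow> psd_on D B \<Longrightarrow> psd_on D (\<lambda>i j. A i j + B i j)"
  unfolding psd_on_def by (simp add: distrib_left distrib_right sum.distrib)

lemma psd_on_sum:
  "finite R \<Longrightarrow> (\<And>r. r \<in> R \<Longrightarrow> psd_on D (A r)) \<Longrightarrow> psd_on D (\<lambda>i j. \<Sum>r\<in>R. A r i j)"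
proof (induction R rule: finite_induct)
  case empty
  then show ?case by (simp add: psd_on_def)
next
  case (insert r R)
  then show ?case using psd_on_add[of D "A r" "\<lambda>i j. \<Sum>r\<in>R. A r i j"] by simp
qed

lemma psd_on_congruence:
  assumes "psd_on S Z"
  shows "psd_on T (\<lambda>p q. \<Sum>s\<in>S. \<Sum>s'\<in>S. L p s * Z s s' * cnj (L q s'))"
  unfolding psd_on_def
proof
  fix v :: "_ \<Rightarrow> complex"
  define u where "u s = (\<Sum>p\<in>T. cnj (L p s) * v p)" for s
  let ?f = "\<lambda>p q s s'. (cnj (v p) * L p s) * Z s s' * (cnj (L q s') * v q)"
  have "(\<Sum>p\<in>T. \<Sum>q\<in>T. cnj (v p) * (\<Sum>s\<in>S. \<Sum>s'\<in>S. L p s * Z s s' * cnj (L q s')) * v q)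
      = (\<Sum>p\<in>T. \<Sum>q\<in>T. \<Sum>s\<in>S. \<Sum>s'\<in>S. ?f p q s s')"
    by (simp add: sum_distrib_left sum_distrib_right mult_ac)
  also have "\<dots> = (\<Sum>s\<in>S. \<Sum>s'\<in>S. \<Sum>p\<in>T. \<Sum>q\<in>T. ?f p q s s')"
    by (simp only: sum.swap[where A = T and B = S])
  also have "\<dots> = (\<Sum>s\<in>S. \<Sum>s'\<in>S. cnj (u s) * Z s s' * u s')"
    by (simp add: u_def sum_distrib_left sum_distrib_right mult_ac)
  also have "0 \<le> \<dots>"
    using assms unfolding psd_on_def by blast
  finally show "0 \<le> (\<Sum>p\<in>T. \<Sum>q\<in>T.
      cnj (v p) * (\<Sum>s\<in>S. \<Sum>s'\<in>S. L p s * Z s s' * cnj (L q s')) * v q)" .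
qed

lemma psd_on_subset:
  assumes "psd_on D A" "finite D" "F \<subseteq> D"
  shows "psd_on F A"
  unfolding psd_on_def
proof
  fix v :: "_ \<Rightarrow> complex"
  define v' where "v' i = (if i \<in> F then v i else 0)" for i
  have "(\<Sum>i\<in>F. \<Sum>j\<in>F. cnj (v i) * A i j * v j)
      = (\<Sum>i\<in>F. \<Sum>j\<in>D. cnj (v' i) * A i j * v' j)"
    using assms(2,3) by (intro sum.cong refl sum.mono_neutral_cong_left) (auto simp: v'_def)
  also have "\<dots> = (\<Sum>i\<in>D. \<Sum>j\<in>D. cnj (v' i) * A i j * v' j)"
    using assms(2,3) by (intro sum.mono_neutral_left) (auto simp: v'_def)
  finally show "0 \<le> (\<Sum>i\<in>F. \<Sum>j\<in>F. cnj (v i) * A i j * v j)"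
    using assms(1) unfolding psd_on_def by simp
qed

lemma psd_on_diag_nonneg:
  assumes "psd_on D A" "finite D" "i \<in> D"
  shows "0 \<le> A i i"
  using psd_on_subset[OF assms(1,2), of "{i}"] assms(3)
  unfolding psd_on_def by (auto dest: spec[of _ "\<lambda>_. 1"])

lemma psd_on_pair:
  assumes "psd_on D A" "finite D" "i \<in> D" "j \<in> D" "i \<noteq> j"
  shows "0 \<le> cnj a * A i i * a + cnj a * A i j * b + cnj b * A j i * a + cnj b * A j j * b"
  using psd_on_subset[OF assms(1,2), of "{i, j}"] assms(3-5)
  unfolding psd_on_def by (auto dest: spec[of _ "\<lambda>x. if x = i then a else b"] simp: add.assoc)

lemma psd_on_hermitian:
  assumes "psd_on D A" "finite D" "i \<in> D" "j \<in> D"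
  shows "A j i = cnj (A i j)"
proof (cases "i = j")
  case True
  then show ?thesis
    using psd_on_diag_nonneg[OF assms(1-3)] by (simp add: less_eq_complex_def complex_eq_iff)
next
  case False
  have "0 \<le> A i i" "0 \<le> A j j" using psd_on_diag_nonneg[OF assms(1,2)] assms(3,4) by auto
  moreover have "0 \<le> A i i + A i j + A j i + A j j"
    using psd_on_pair[OF assms False, of 1 1] by simp
  moreover have "0 \<le> A i i + \<i> * A i j - \<i> * A j i + A j j"
    using psd_on_pair[OF assms False, of 1 \<i>] by (simp add: mult.commute)
  ultimately show ?thesis by (simp add: less_eq_complex_def complex_eq_iff)
qed

lemma psd_on_zero_diag_row:
  assumes "psd_on D A" "finite D" "x \<in> D" "j \<in> D" "A x x = 0"
  shows "A x j = 0"
proof (rule ccontr)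
  assume ne: "A x j \<noteq> 0"
  then have "x \<noteq> j" using assms(5) by auto
  define z where "z = A x j"
  define r where "r = (Re (A j j) + 1) / (2 * cmod z ^ 2)"
  have "0 \<le> cnj (- of_real r * z) * A x x * (- of_real r * z) + cnj (- of_real r * z) * A x j * 1
      + cnj 1 * A j x * (- of_real r * z) + cnj 1 * A j j * 1"
    by (rule psd_on_pair) (use assms \<open>x \<noteq> j\<close> in auto)
  also have "\<dots> = A j j - 2 * of_real r * (cnj z * z)"
    using psd_on_hermitian[OF assms(1-4)] assms(5) by (simp add: z_def algebra_simps)
  also have "cnj z * z = of_real (cmod z ^ 2)"
    using complex_norm_square[of z] by (simp add: mult.commute)
  finally have "0 \<le> Re (A j j) - 2 * r * cmod z ^ 2"
    by (simp add: less_eq_complex_def)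
  moreover have "2 * r * cmod z ^ 2 = Re (A j j) + 1"
    using ne by (simp add: r_def z_def)
  ultimately show False by simp
qed

lemma psd_on_schur_complement:
  assumes psd: "psd_on (insert x F) A" and fin: "finite F" and "x \<notin> F" and "A x x \<noteq> 0"
  shows "psd_on F (\<lambda>i j. A i j - A i x * A x j / A x x)"
  unfolding psd_on_def
proof
  fix v :: "_ \<Rightarrow> complex"
  have "0 \<le> A x x" by (rule psd_on_diag_nonneg[OF psd]) (use fin in auto)
  then have real: "cnj (A x x) = A x x"
    by (simp add: less_eq_complex_def complex_eq_iff)
  have herm: "A i x = cnj (A x i)" if "i \<in> F" for i
    by (rule psd_on_hermitian[OF psd]) (use fin that in auto)
  define Q where "Q = (\<Sum>i\<in>F. \<Sum>j\<in>F. cnj (v i) * A i j * v j)"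
  define s where "s = (\<Sum>j\<in>F. A x j * v j)"
  define t where "t = - s / A x x"
  have col: "(\<Sum>i\<in>F. cnj (v i) * A i x) = cnj s"
    by (simp add: s_def herm mult.commute cong: sum.cong)
  \<comment> \<open>t minimises the form of A at v(x := t); the minimum is the form of the Schur complement\<close>
  have "0 \<le> (\<Sum>i\<in>insert x F. \<Sum>j\<in>insert x F. cnj ((v(x := t)) i) * A i j * (v(x := t)) j)"
    using psd unfolding psd_on_def by blast
  also have "\<dots> = cnj t * A x x * t + cnj t * s + cnj s * t + Q"
  proof -
    have "\<And>i. i \<in> F \<Longrightarrow> i \<noteq> x" using \<open>x \<notin> F\<close> by blast
    then show ?thesis
      using fin \<open>x \<notin> F\<close> col
      by (simp add: Q_def s_def sum.distrib sum_distrib_left cong: sum.cong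
          flip: sum_distrib_right) (simp add: algebra_simps)
  qed
  also have "\<dots> = Q - cnj s * s / A x x"
    using \<open>A x x \<noteq> 0\<close> real by (simp add: t_def field_simps)
  also have "\<dots> = (\<Sum>i\<in>F. \<Sum>j\<in>F. cnj (v i) * (A i j - A i x * A x j / A x x) * v j)"
    unfolding Q_def col[symmetric]
    unfolding s_def sum_product sum_divide_distrib sum_subtractf[symmetric]
    by (intro sum.cong refl) (simp add: algebra_simps)
  finally show "0 \<le> \<dots>" .
qed

lemma psd_on_insert_rank_one:
  assumes psd: "psd_on (insert x F) A" and fin: "finite F" and "x \<notin> F"
  obtains w where "psd_on F (\<lambda>i j. A i j - w i * cnj (w j))"
    and "\<And>i. i \<in> insert x F \<Longrightarrow> A i x = w i * cnj (w x)"
proof (cases "A x x = 0")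
  case True
  have finI: "finite (insert x F)" using fin by simp
  have "A i x = 0" if "i \<in> insert x F" for i
    using psd_on_hermitian[OF psd finI _ that, of x] psd_on_zero_diag_row[OF psd finI _ that True]
    by simp
  then show ?thesis using that[of "\<lambda>_. 0"] psd_on_subset[OF psd finI] by auto
next
  case False
  have "0 \<le> A x x" by (rule psd_on_diag_nonneg[OF psd]) (use fin in auto)
  then have \<alpha>: "A x x = of_real (Re (A x x))" "Re (A x x) > 0"
    using False by (auto simp: less_eq_complex_def complex_eq_iff)
  define w where "w i = A i x / of_real (sqrt (Re (A x x)))" for i
  have w: "w i * cnj (w j) = A i x * A x j / A x x" if "j \<in> insert x F" for i j
  proof -
    have "cnj (A j x) = A x j"
      using psd_on_hermitian[OF psd _ _ that, of x] fin by simp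
    then show ?thesis
      using \<alpha> by (simp add: w_def flip: of_real_mult)
  qed
  show ?thesis
  proof (rule that)
    show "psd_on F (\<lambda>i j. A i j - w i * cnj (w j))"
      using psd_on_schur_complement[OF assms False] by (subst psd_on_cong) (auto simp: w)
    show "A i x = w i * cnj (w x)" for i
      using w[of x i] False by simp
  qed
qed

lemma psd_on_gram:
  assumes "finite D" "psd_on D A"
  shows "\<exists>u. \<forall>i\<in>D. \<forall>j\<in>D. A i j = (\<Sum>r\<in>D. u r i * cnj (u r j))"
  using assms
proof (induction D arbitrary: A rule: finite_induct)
  case empty
  then show ?case by simp
next
  case (insert x F)
  obtain w where psd: "psd_on F (\<lambda>i j. A i j - w i * cnj (w j))"
    and col: "\<And>i. i \<in> insert x F \<Longrightarrow> A i x = w i * cnj (w x)"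
    using psd_on_insert_rank_one[OF insert.prems insert.hyps] by blast
  obtain u where u: "\<forall>i\<in>F. \<forall>j\<in>F. A i j - w i * cnj (w j) = (\<Sum>r\<in>F. u r i * cnj (u r j))"
    using insert.IH[OF psd] by blast
  define u' where "u' r i = (if r = x then w i else if i = x then 0 else u r i)" for r i
  have "A i j = (\<Sum>r\<in>insert x F. u' r i * cnj (u' r j))"
    if ij: "i \<in> insert x F" "j \<in> insert x F" for i j
  proof -
    have "(\<Sum>r\<in>F. u' r i * cnj (u' r j))
        = (\<Sum>r\<in>F. (if i = x then 0 else u r i) * cnj (if j = x then 0 else u r j))"
      using insert.hyps(2) by (intro sum.cong refl) (auto simp: u'_def)
    then have split: "(\<Sum>r\<in>insert x F. u' r i * cnj (u' r j)) = w i * cnj (w j)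
        + (\<Sum>r\<in>F. (if i = x then 0 else u r i) * cnj (if j = x then 0 else u r j))"
      using insert.hyps by (simp add: u'_def)
    consider "i = x" | "j = x" | "i \<in> F" "j \<in> F" using ij by blast
    then show ?thesis
    proof cases
      case 1
      have "A x j = cnj (A j x)"
        using psd_on_hermitian[OF insert.prems _ _ ij(2), of x] insert.hyps by simp
      then show ?thesis using 1 col[OF ij(2)] split by simp
    next
      case 2
      then show ?thesis using col[OF ij(1)] split by simp
    next
      case 3
      moreover have "i \<noteq> x" "j \<noteq> x" using 3 insert.hyps(2) by auto
      ultimately show ?thesis using u split by (simp add: algebra_simps)
    qed
  qed
  then show ?case by blast
qed

section \<open>Linear maps and complete positivity\<close>

lemma supp_on_UNIV [simp]: "supp_on UNIV A"
  by (simp add: supp_on_def)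

lemma trace_on_UNIV_prod: "trace_on UNIV X = (\<Sum>x\<in>UNIV. \<Sum>y\<in>UNIV. X (x, y) (x, y))"
  by (simp add: trace_on_def sum.cartesian_product'[of _ UNIV UNIV, simplified])

lemma trace_on_add: "trace_on D (\<lambda>i j. A i j + B i j) = trace_on D A + trace_on D B"
  by (simp add: trace_on_def sum.distrib)

lemma lin_on_UNIV_add:
  "lin_on UNIV N \<Longrightarrow> N (\<lambda>i j. A i j + c * B i j) = (\<lambda>i j. N A i j + c * N B i j)"
  unfolding lin_on_def by simp

lemma lin_on_UNIV_scale:
  assumes "lin_on UNIV N"
  shows "N (\<lambda>i j. c * A i j) = (\<lambda>i j. c * N A i j)"
proof -
  have "N (\<lambda>i j. 0) = (\<lambda>i j. N (\<lambda>i j. 0) i j + 1 * N (\<lambda>i j. 0) i j)"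
    using lin_on_UNIV_add[OF assms, of "\<lambda>i j. 0" 1 "\<lambda>i j. 0"] by simp
  then have "N (\<lambda>i j. 0) = (\<lambda>i j. 0)" by (simp add: fun_eq_iff)
  then show ?thesis
    using lin_on_UNIV_add[OF assms, of "\<lambda>i j. 0" c A] by simp
qed

lemma channel_on_UNIV_D:
  assumes "is_channel N"
  shows "lin_on UNIV N" "trace_on UNIV (N A) = trace_on UNIV A"
    "supp_on (UNIV \<times> {..<k}) Z \<Longrightarrow> psd_on (UNIV \<times> {..<k}) Z \<Longrightarrow>
      psd_on (UNIV \<times> {..<k}) (tensor_id k N Z)"
  using assms unfolding channel_on_def by auto

lemma supp_on_tensor_id: "supp_on (UNIV \<times> {..<k}) (tensor_id k F Z)"
  by (auto simp: supp_on_def tensor_id_def)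

lemma tensor_id_add:
  "tensor_id k (\<lambda>X i j. F X i j + G X i j) Z = (\<lambda>p q. tensor_id k F Z p q + tensor_id k G Z p q)"
  by (auto simp: tensor_id_def fun_eq_iff)

lemma tensor_id_comp: "tensor_id k (\<lambda>X. N (F X)) Z = tensor_id k N (tensor_id k F Z)"
  by (auto simp: tensor_id_def fun_eq_iff)

lemma psd_on_tensor_id_comp:
  assumes "is_channel N" "psd_on (UNIV \<times> {..<k}) (tensor_id k F Z)"
  shows "psd_on (UNIV \<times> {..<k}) (tensor_id k (\<lambda>X. N (F X)) Z)"
  unfolding tensor_id_comp by (rule channel_on_UNIV_D(3)[OF assms(1) supp_on_tensor_id assms(2)])

lemma psd_on_tensor_id_kraus:
  fixes F :: "('a \<times> 'b) op \<Rightarrow> 'j op" and g :: "'r \<Rightarrow> 'j \<Rightarrow> 'a"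
    and L :: "'r \<Rightarrow> 'j \<Rightarrow> 'b \<Rightarrow> complex"
  assumes "finite A" "finite B" "finite R"
    and g: "\<And>r e. r \<in> R \<Longrightarrow> e \<in> E \<Longrightarrow> g r e \<in> A"
    and F: "\<And>X e e'. e \<in> E \<Longrightarrow> e' \<in> E \<Longrightarrow>
      F X e e' = (\<Sum>r\<in>R. \<Sum>b\<in>B. \<Sum>c\<in>B. L r e b * X (g r e, b) (g r e', c) * cnj (L r e' c))"
    and "psd_on ((A \<times> B) \<times> {..<k}) Z"
  shows "psd_on (E \<times> {..<k}) (tensor_id k F Z)"
  \<comment> \<open>F has Kraus operators K_r with entries K_r e (a, b) = [a = g r e] L r e b\<close>
proof -
  define S where "S = (A \<times> B) \<times> {..<k}"
  define K where "K r p s = (if fst (fst s) = g r (fst p) \<and> snd s = snd p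
    then L r (fst p) (snd (fst s)) else 0)"
    for r and p :: "'j \<times> nat" and s :: "('a \<times> 'b) \<times> nat"
  have "psd_on (E \<times> {..<k})
      (\<lambda>p q. \<Sum>r\<in>R. \<Sum>s\<in>S. \<Sum>s'\<in>S. K r p s * Z s s' * cnj (K r q s'))"
    by (intro psd_on_sum psd_on_congruence) (use assms in \<open>auto simp: S_def\<close>)
  moreover have "(\<Sum>s\<in>S. \<Sum>s'\<in>S. K r (e, a) s * Z s s' * cnj (K r (e', a') s'))
      = (\<Sum>b\<in>B. \<Sum>c\<in>B. L r e b * Z ((g r e, b), a) ((g r e', c), a') * cnj (L r e' c))"
    if "r \<in> R" "e \<in> E" "e' \<in> E" "a < k" "a' < k" for r e a e' a'
  proof -
    have "(\<Sum>s\<in>S. \<Sum>s'\<in>S. K r (e, a) s * Z s s' * cnj (K r (e', a') s'))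
      = (\<Sum>s\<in>({g r e} \<times> B) \<times> {a}. \<Sum>s'\<in>({g r e'} \<times> B) \<times> {a'}.
           L r e (snd (fst s)) * Z s s' * cnj (L r e' (snd (fst s'))))"
      using assms(1,2) g that
      by (intro sum.mono_neutral_cong_right) (auto simp: S_def K_def)
    then show ?thesis by (simp add: sum.cartesian_product')
  qed
  ultimately show ?thesis
    by (subst psd_on_cong[where B =
          "\<lambda>p q. \<Sum>r\<in>R. \<Sum>s\<in>S. \<Sum>s'\<in>S. K r p s * Z s s' * cnj (K r q s')"])
      (auto simp: tensor_id_def F)
qed

section \<open>The branches J1 and J0\<close>

abbreviation compress :: "('a::finite \<Rightarrow> complex) \<Rightarrow> ('w \<times> 'a) op \<Rightarrow> 'w op" where
  "compress \<phi> X \<equiv> ptrace2 (id_tensor (J1 \<phi>) X)"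

definition compl_proj :: "('a \<Rightarrow> complex) \<Rightarrow> 'a op" where
  "compl_proj \<phi> = (\<lambda>i j. idop i j - proj \<phi> i j)"

lemma unit_vec_sum: "unit_vec \<phi> \<Longrightarrow> (\<Sum>a\<in>UNIV. \<phi> a * cnj (\<phi> a)) = 1"
  by (simp add: unit_vec_def mult.commute)

lemma id_tensor_J1_eq:
  "id_tensor (J1 \<phi>) X (w, a) (w', a') =
     \<phi> a * cnj (\<phi> a') * (\<Sum>b\<in>UNIV. \<Sum>c\<in>UNIV. cnj (\<phi> b) * X (w, b) (w', c) * \<phi> c)"
proof -
  have "id_tensor (J1 \<phi>) X (w, a) (w', a') =
      (\<Sum>c\<in>UNIV. \<Sum>b\<in>UNIV. \<phi> a * cnj (\<phi> a') * (cnj (\<phi> b) * X (w, b) (w', c) * \<phi> c))"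
    by (simp add: id_tensor_def J1_def mmul_def proj_def sum_distrib_left sum_distrib_right mult_ac)
  also have "\<dots>
      = \<phi> a * cnj (\<phi> a') * (\<Sum>b\<in>UNIV. \<Sum>c\<in>UNIV. cnj (\<phi> b) * X (w, b) (w', c) * \<phi> c)"
    unfolding sum_distrib_left by (rule sum.swap)
  finally show ?thesis .
qed

lemma compress_eq:
  assumes "unit_vec \<phi>"
  shows "compress \<phi> X w w' = (\<Sum>b\<in>UNIV. \<Sum>c\<in>UNIV. cnj (\<phi> b) * X (w, b) (w', c) * \<phi> c)"
  unfolding ptrace2_def id_tensor_J1_eq sum_distrib_right[symmetric] unit_vec_sum[OF assms] by simp

lemma kron_compress_proj:
  assumes "unit_vec \<phi>"
  shows "kron (compress \<phi> X) (proj \<phi>) = id_tensor (J1 \<phi>) X"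
  by (auto simp: fun_eq_iff kron_def proj_def compress_eq[OF assms] id_tensor_J1_eq)

lemma id_tensor_J0_eq:
  "id_tensor (J0 \<phi>) X p q = (\<Sum>b\<in>UNIV. \<Sum>c\<in>UNIV.
     compl_proj \<phi> (snd p) b * X (fst p, b) (fst q, c) * compl_proj \<phi> c (snd q))"
proof -
  have "id_tensor (J0 \<phi>) X p q = (\<Sum>c\<in>UNIV. \<Sum>b\<in>UNIV.
      compl_proj \<phi> (snd p) b * X (fst p, b) (fst q, c) * compl_proj \<phi> c (snd q))"
    by (simp add: id_tensor_def J0_def Let_def mmul_def compl_proj_def[symmetric] sum_distrib_right
        split: prod.split)
  also have "\<dots> = (\<Sum>b\<in>UNIV. \<Sum>c\<in>UNIV.
      compl_proj \<phi> (snd p) b * X (fst p, b) (fst q, c) * compl_proj \<phi> c (snd q))"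
    by (rule sum.swap)
  finally show ?thesis .
qed

lemma cnj_compl_proj: "cnj (compl_proj \<phi> a b) = compl_proj \<phi> b a"
  by (simp add: compl_proj_def idop_def proj_def)

lemma sum_idop_left: "(\<Sum>a\<in>UNIV. idop c a * f a) = f (c::'a::finite)"
  by (simp add: idop_def if_distrib[of "\<lambda>x. x * _"] cong: if_cong)

lemma sum_idop_right: "(\<Sum>a\<in>UNIV. f a * idop a b) = f (b::'a::finite)"
  by (simp add: idop_def if_distrib[of "\<lambda>x. _ * x"] cong: if_cong)

lemma compl_proj_idem:
  assumes "unit_vec \<phi>"
  shows "(\<Sum>a\<in>UNIV. compl_proj \<phi> c a * compl_proj \<phi> a b) = compl_proj \<phi> c b"
proof -
  have "(\<Sum>a\<in>UNIV. proj \<phi> c a * proj \<phi> a b)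
      = \<phi> c * (\<Sum>a\<in>UNIV. \<phi> a * cnj (\<phi> a)) * cnj (\<phi> b)"
    by (simp add: proj_def sum_distrib_left sum_distrib_right mult_ac)
  then have "(\<Sum>a\<in>UNIV. proj \<phi> c a * proj \<phi> a b) = proj \<phi> c b"
    by (simp add: unit_vec_sum[OF assms] proj_def)
  then show ?thesis
    by (simp add: compl_proj_def left_diff_distrib right_diff_distrib sum_subtractf sum_idop_left
        sum_idop_right)
qed

lemma trace_compress_add_trace_J0:
  assumes "unit_vec \<phi>"
  shows "trace_on UNIV (compress \<phi> X) + trace_on UNIV (id_tensor (J0 \<phi>) X) = trace_on UNIV X"
proof -
  let ?Q = "compl_proj \<phi>"
  have "trace_on UNIV (id_tensor (J0 \<phi>) X)
      = (\<Sum>w\<in>UNIV. \<Sum>a\<in>UNIV. \<Sum>b\<in>UNIV. \<Sum>c\<in>UNIV. X (w, b) (w, c) * (?Q c a * ?Q a b))"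
    by (simp add: trace_on_UNIV_prod id_tensor_J0_eq mult_ac)
  also have "\<dots> = (\<Sum>w\<in>UNIV. \<Sum>b\<in>UNIV. \<Sum>c\<in>UNIV. \<Sum>a\<in>UNIV. X (w, b) (w, c) * (?Q c a * ?Q a b))"
    by (rule sum.cong[OF refl], rule trans[OF sum.swap], rule sum.cong[OF refl], rule sum.swap)
  also have "\<dots> = (\<Sum>w\<in>UNIV. \<Sum>b\<in>UNIV. \<Sum>c\<in>UNIV. X (w, b) (w, c) * ?Q c b)"
    by (simp add: sum_distrib_left[symmetric] compl_proj_idem[OF assms])
  finally have "trace_on UNIV (compress \<phi> X) + trace_on UNIV (id_tensor (J0 \<phi>) X)
      = (\<Sum>w\<in>UNIV. \<Sum>b\<in>UNIV. \<Sum>c\<in>UNIV. X (w, b) (w, c) * idop c b)"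
    by (simp add: trace_on_def compress_eq[OF assms] compl_proj_def proj_def algebra_simps
        sum.distrib sum_subtractf)
  also have "\<dots> = trace_on UNIV X"
    by (simp add: trace_on_UNIV_prod sum_idop_right)
  finally show ?thesis .
qed

lemma lin_on_compress:
  assumes "unit_vec \<phi>"
  shows "lin_on UNIV (compress \<phi> :: ('w \<times> 'a::finite) op \<Rightarrow> 'w op)"
  unfolding lin_on_def
  by (simp add: fun_eq_iff compress_eq[OF assms] algebra_simps sum.distrib sum_distrib_left)

lemma lin_on_id_tensor_J0: "lin_on UNIV (id_tensor (J0 \<phi>) :: ('w \<times> 'a::finite) op \<Rightarrow> _)"
  unfolding lin_on_def
  by (simp add: fun_eq_iff id_tensor_J0_eq algebra_simps sum.distrib sum_distrib_left)

lemma psd_on_tensor_id_compress: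
  fixes \<phi> :: "'a::finite \<Rightarrow> complex" and Z :: "(('w::finite \<times> 'a) \<times> nat) op"
  assumes "unit_vec \<phi>" "psd_on (UNIV \<times> {..<k}) Z"
  shows "psd_on (UNIV \<times> {..<k}) (tensor_id k (compress \<phi>) Z)"
  by (rule psd_on_tensor_id_kraus[where A = UNIV and B = UNIV and R = "UNIV :: unit set"
        and g = "\<lambda>_ e. e" and L = "\<lambda>_ _ b. cnj (\<phi> b)"])
    (use assms in \<open>auto simp: compress_eq\<close>)

lemma psd_on_tensor_id_J0:
  fixes \<phi> :: "'a::finite \<Rightarrow> complex" and Z :: "(('w::finite \<times> 'a) \<times> nat) op"
  assumes "psd_on (UNIV \<times> {..<k}) Z"
  shows "psd_on (UNIV \<times> {..<k}) (tensor_id k (id_tensor (J0 \<phi>)) Z)"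
  by (rule psd_on_tensor_id_kraus[where A = UNIV and B = UNIV and R = "UNIV :: unit set"
        and g = "\<lambda>_ e. fst e" and L = "\<lambda>_ e b. compl_proj \<phi> (snd e) b"])
    (use assms in \<open>auto simp: id_tensor_J0_eq cnj_compl_proj\<close>)

lemma id_tensor_Jmap:
  "id_tensor (Jmap \<phi>) X = (\<lambda>p q. id_tensor (J1 \<phi>) X p q + id_tensor (J0 \<phi>) X p q)"
  by (simp add: fun_eq_iff id_tensor_def Jmap_def split: prod.split)

section \<open>The supermap R\<close>

lemma Rmap_channel:
  fixes \<phi> :: "'a::finite \<Rightarrow> complex" and \<Gamma> :: "('w::finite \<times> 'a) op \<Rightarrow> ('y::finite) op"
    and N :: "'w op \<Rightarrow> 'y op"
  assumes \<phi>: "unit_vec \<phi>" and \<Gamma>: "is_channel \<Gamma>" and \<tau>: "density \<tau>" and N: "is_channel N"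
  shows "is_channel (Rmap \<phi> \<Gamma> \<tau> N)"
proof -
  have "trace_on UNIV (N \<tau>) = 1"
    using \<tau> by (simp add: channel_on_UNIV_D(2)[OF N] density_def)
  then have R: "Rmap \<phi> \<Gamma> \<tau> N
      = (\<lambda>X i j. N (compress \<phi> X) i j + \<Gamma> (id_tensor (J0 \<phi>) X) i j)"
    by (simp add: Rmap_def fun_eq_iff)
  have "lin_on UNIV (Rmap \<phi> \<Gamma> \<tau> N)"
    unfolding lin_on_def
  proof (intro allI impI)
    fix A B :: "('w \<times> 'a) op" and c :: complex
    have "N (compress \<phi> (\<lambda>i j. A i j + c * B i j))
        = (\<lambda>i j. N (compress \<phi> A) i j + c * N (compress \<phi> B) i j)"
      by (simp only: lin_on_UNIV_add[OF lin_on_compress[OF \<phi>]]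
          lin_on_UNIV_add[OF channel_on_UNIV_D(1)[OF N]])
    moreover have "\<Gamma> (id_tensor (J0 \<phi>) (\<lambda>i j. A i j + c * B i j))
        = (\<lambda>i j. \<Gamma> (id_tensor (J0 \<phi>) A) i j + c * \<Gamma> (id_tensor (J0 \<phi>) B) i j)"
      by (simp only: lin_on_UNIV_add[OF lin_on_id_tensor_J0]
          lin_on_UNIV_add[OF channel_on_UNIV_D(1)[OF \<Gamma>]])
    ultimately show "Rmap \<phi> \<Gamma> \<tau> N (\<lambda>i j. A i j + c * B i j)
        = (\<lambda>i j. Rmap \<phi> \<Gamma> \<tau> N A i j + c * Rmap \<phi> \<Gamma> \<tau> N B i j)"
      unfolding R by (simp add: fun_eq_iff algebra_simps)
  qed
  moreover have "trace_on UNIV (Rmap \<phi> \<Gamma> \<tau> N X) = trace_on UNIV X" for X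
    unfolding R trace_on_add channel_on_UNIV_D(2)[OF N] channel_on_UNIV_D(2)[OF \<Gamma>]
    by (rule trace_compress_add_trace_J0[OF \<phi>])
  moreover have "psd_on (UNIV \<times> {..<k}) (tensor_id k (Rmap \<phi> \<Gamma> \<tau> N) Z)"
    if "psd_on (UNIV \<times> {..<k}) Z" for k Z
    unfolding R tensor_id_add
    using psd_on_tensor_id_comp[OF N psd_on_tensor_id_compress[OF \<phi> that]]
      psd_on_tensor_id_comp[OF \<Gamma> psd_on_tensor_id_J0[OF that]]
    by (rule psd_on_add)
  ultimately show ?thesis
    by (simp add: channel_on_def)
qed

lemma Rmap_S3:
  fixes \<phi> :: "'a::finite \<Rightarrow> complex" and \<Gamma> :: "('w::finite \<times> 'a) op \<Rightarrow> ('y::finite) op"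
  assumes \<phi>: "unit_vec \<phi>" and \<Gamma>: "is_channel \<Gamma>" and \<tau>: "density \<tau>"
    and invariant: "(\<lambda>X. \<Gamma> (id_tensor (Jmap \<phi>) X)) = \<Gamma>"
  shows "Rmap \<phi> \<Gamma> \<tau> (S3 \<phi> \<Gamma>) = \<Gamma>"
proof
  fix X
  have "trace_on UNIV (kron \<tau> (proj \<phi>)) = trace_on UNIV \<tau> * (\<Sum>a\<in>UNIV. \<phi> a * cnj (\<phi> a))"
    unfolding trace_on_UNIV_prod by (simp add: trace_on_def kron_def proj_def sum_product)
  then have "trace_on UNIV (S3 \<phi> \<Gamma> \<tau>) = 1"
    using \<tau> by (simp add: S3_def channel_on_UNIV_D(2)[OF \<Gamma>] density_def unit_vec_sum[OF \<phi>])
  then have "Rmap \<phi> \<Gamma> \<tau> (S3 \<phi> \<Gamma>) X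
      = (\<lambda>i j. \<Gamma> (id_tensor (J1 \<phi>) X) i j + 1 * \<Gamma> (id_tensor (J0 \<phi>) X) i j)"
    by (simp add: Rmap_def S3_def kron_compress_proj[OF \<phi>])
  also have "\<dots> = \<Gamma> (id_tensor (Jmap \<phi>) X)"
    by (simp only: id_tensor_Jmap lin_on_UNIV_add[OF channel_on_UNIV_D(1)[OF \<Gamma>], symmetric]) simp
  also have "\<dots> = \<Gamma> X"
    using fun_cong[OF invariant, of X] by simp
  finally show "Rmap \<phi> \<Gamma> \<tau> (S3 \<phi> \<Gamma>) X = \<Gamma> X" .
qed

section \<open>Realisation of R by pre- and post-processing\<close>

definition basis_index :: "'p::finite \<Rightarrow> nat" where
  "basis_index = (SOME f. bij_betw f UNIV {..<card (UNIV :: 'p set)})"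

definition basis_elem :: "nat \<Rightarrow> 'p::finite" where
  "basis_elem = the_inv_into UNIV basis_index"

lemma bij_betw_basis_index:
  "bij_betw (basis_index :: 'p::finite \<Rightarrow> nat) UNIV {..<card (UNIV :: 'p set)}"
proof -
  have "\<exists>f :: 'p \<Rightarrow> nat. bij_betw f UNIV {..<card (UNIV :: 'p set)}"
    using ex_bij_betw_finite_nat[of "UNIV :: 'p set"] by (simp add: atLeast0LessThan)
  then show ?thesis
    unfolding basis_index_def by (rule someI_ex)
qed

lemma basis_index_less [simp]: "basis_index (p :: 'p::finite) < card (UNIV :: 'p set)"
  using bij_betw_basis_index by (auto simp: bij_betw_def)

lemma basis_index_neq_card [simp]: "basis_index (p :: 'p::finite) \<noteq> card (UNIV :: 'p set)"
  by (rule less_imp_neq[OF basis_index_less])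

lemma basis_elem_index [simp]: "basis_elem (basis_index p) = p"
  unfolding basis_elem_def
  by (rule the_inv_into_f_f) (use bij_betw_basis_index in \<open>auto simp: bij_betw_def\<close>)

lemma sum_basis_index:
  "(\<Sum>p\<in>UNIV. f (basis_index (p :: 'p::finite))) = (\<Sum>\<alpha><card (UNIV :: 'p set). f \<alpha>)"
  using sum.reindex_bij_betw[OF bij_betw_basis_index, of f] by simp

lemma sum_basis_elem:
  "(\<Sum>\<alpha><card (UNIV :: 'p set). f (basis_elem \<alpha> :: 'p::finite)) = (\<Sum>p\<in>UNIV. f p)"
  using sum_basis_index[where f = "\<lambda>\<alpha>. f (basis_elem \<alpha>)" and 'p = 'p] by simp

text \<open>The ancilla has dimension n + 1, where n = |W \<times> A|. Its index n carries the J1 branch;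
  an index \<alpha> < n carries the basis vector basis_elem \<alpha> of W \<otimes> A in the J0 branch, where \<tau> is
  prepared on W. The post-processing reads off block n and passes the blocks \<alpha> < n, with Y
  traced out, to \<Gamma>.\<close>

definition pre_J1 :: "('a::finite \<Rightarrow> complex) \<Rightarrow> ('w::finite \<times> 'a) op \<Rightarrow> ('w \<times> nat) op"
  where "pre_J1 \<phi> X = (let n = card (UNIV :: ('w \<times> 'a) set) in
    (\<lambda>(w, \<alpha>) (w', \<beta>). if \<alpha> = n \<and> \<beta> = n then compress \<phi> X w w' else 0))"

definition pre_J0 :: "('a::finite \<Rightarrow> complex) \<Rightarrow> 'w op \<Rightarrow> ('w::finite \<times> 'a) op \<Rightarrow> ('w \<times> nat) op"
  where "pre_J0 \<phi> \<tau> X = (let n = card (UNIV :: ('w \<times> 'a) set) in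
    (\<lambda>(w, \<alpha>) (w', \<beta>). if \<alpha> < n \<and> \<beta> < n
      then \<tau> w w' * id_tensor (J0 \<phi>) X (basis_elem \<alpha>) (basis_elem \<beta>) else 0))"

definition pre_channel :: "('a::finite \<Rightarrow> complex) \<Rightarrow> 'w op \<Rightarrow> ('w::finite \<times> 'a) op \<Rightarrow> ('w \<times> nat) op"
  where "pre_channel \<phi> \<tau> X = (\<lambda>p q. pre_J1 \<phi> X p q + pre_J0 \<phi> \<tau> X p q)"

definition J0_register :: "('y::finite \<times> nat) op \<Rightarrow> ('w::finite \<times> 'a::finite) op"
  where "J0_register Z = (\<lambda>p p'. \<Sum>y\<in>UNIV. Z (y, basis_index p) (y, basis_index p'))"

definition post_channel :: "(('w::finite \<times> 'a::finite) op \<Rightarrow> 'y op) \<Rightarrow> ('y::finite \<times> nat) op \<Rightarrow> 'y op"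
  where "post_channel \<Gamma> Z = (let n = card (UNIV :: ('w \<times> 'a) set) in
    (\<lambda>y y'. Z (y, n) (y', n) + \<Gamma> (J0_register Z) y y'))"

lemma psd_on_tensor_id_pre_J1:
  fixes \<phi> :: "'a::finite \<Rightarrow> complex" and Z :: "(('w::finite \<times> 'a) \<times> nat) op"
  assumes "unit_vec \<phi>" "psd_on (UNIV \<times> {..<k}) Z"
  shows "psd_on (E \<times> {..<k}) (tensor_id k (pre_J1 \<phi>) Z)"
  by (rule psd_on_tensor_id_kraus[where A = UNIV and B = UNIV and R = "UNIV :: unit set"
        and g = "\<lambda>_ e. fst e"
        and L = "\<lambda>_ e b. if snd e = card (UNIV :: ('w \<times> 'a) set) then cnj (\<phi> b) else 0"])
    (use assms in \<open>auto simp: pre_J1_def Let_def compress_eq\<close>)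

lemma psd_on_tensor_id_pre_J0:
  fixes \<phi> :: "'a::finite \<Rightarrow> complex" and Z :: "(('w::finite \<times> 'a) \<times> nat) op"
    and u :: "'w \<Rightarrow> 'w \<Rightarrow> complex"
  assumes \<tau>: "\<And>w w'. \<tau> w w' = (\<Sum>r\<in>UNIV. u r w * cnj (u r w'))"
    and "psd_on (UNIV \<times> {..<k}) Z"
  shows "psd_on (E \<times> {..<k}) (tensor_id k (pre_J0 \<phi> \<tau>) Z)"
proof -
  let ?n = "card (UNIV :: ('w \<times> 'a) set)"
  let ?p = "\<lambda>e. basis_elem (snd e) :: 'w \<times> 'a"
  let ?L = "\<lambda>r e b. if snd e < ?n then u r (fst e) * compl_proj \<phi> (snd (?p e)) b else 0"
  show ?thesis
  proof (rule psd_on_tensor_id_kraus[where A = UNIV and B = UNIV and R = UNIV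
        and g = "\<lambda>_ e. fst (?p e)" and L = ?L])
    fix X :: "('w \<times> 'a) op" and e e' :: "'w \<times> nat"
    obtain w \<alpha> w' \<beta> where e: "e = (w, \<alpha>)" "e' = (w', \<beta>)" by fastforce
    show "pre_J0 \<phi> \<tau> X e e' = (\<Sum>r\<in>UNIV. \<Sum>b\<in>UNIV. \<Sum>c\<in>UNIV.
        ?L r e b * X (fst (?p e), b) (fst (?p e'), c) * cnj (?L r e' c))"
      (is "_ = ?kraus")
    proof (cases "\<alpha> < ?n \<and> \<beta> < ?n")
      case True
      then have "pre_J0 \<phi> \<tau> X e e' = (\<Sum>r\<in>UNIV. u r w * cnj (u r w') *
          id_tensor (J0 \<phi>) X (basis_elem \<alpha>) (basis_elem \<beta>))"
        by (simp add: e pre_J0_def Let_def \<tau> sum_distrib_right)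
      also have "\<dots> = ?kraus"
        using True by (simp add: e id_tensor_J0_eq cnj_compl_proj sum_distrib_left mult_ac)
      finally show ?thesis .
    qed (auto simp: e pre_J0_def Let_def)
  qed (use assms in auto)
qed

lemma trace_pre_channel:
  fixes \<phi> :: "'a::finite \<Rightarrow> complex" and \<tau> :: "('w::finite) op"
  assumes \<phi>: "unit_vec \<phi>" and \<tau>: "trace_on UNIV \<tau> = 1"
  shows "trace_on (UNIV \<times> {..<Suc (card (UNIV :: ('w \<times> 'a) set))}) (pre_channel \<phi> \<tau> X)
    = trace_on UNIV X"
proof -
  let ?n = "card (UNIV :: ('w \<times> 'a) set)"
  have "trace_on (UNIV \<times> {..<Suc ?n}) (pre_channel \<phi> \<tau> X)
      = trace_on UNIV (compress \<phi> X)
        + trace_on UNIV \<tau> * (\<Sum>\<alpha><?n. id_tensor (J0 \<phi>) X (basis_elem \<alpha>) (basis_elem \<alpha>))"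
    by (simp add: trace_on_def sum.cartesian_product' pre_channel_def pre_J1_def pre_J0_def Let_def
        lessThan_Suc sum.distrib sum_product)
  also have "\<dots> = trace_on UNIV X"
    using \<tau> trace_compress_add_trace_J0[OF \<phi>, of X]
      sum_basis_elem[of "\<lambda>p. id_tensor (J0 \<phi>) X p p"]
    by (simp add: trace_on_def)
  finally show ?thesis .
qed

lemma pre_channel_channel:
  fixes \<phi> :: "'a::finite \<Rightarrow> complex" and \<tau> :: "('w::finite) op"
  assumes \<phi>: "unit_vec \<phi>" and \<tau>: "density \<tau>"
  shows "channel_on UNIV (UNIV \<times> {..<Suc (card (UNIV :: ('w \<times> 'a) set))}) (pre_channel \<phi> \<tau>)"
proof -
  have "psd_on UNIV \<tau>" using \<tau> by (simp add: density_def)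
  then obtain u :: "'w \<Rightarrow> 'w \<Rightarrow> complex"
    where u: "\<And>w w'. \<tau> w w' = (\<Sum>r\<in>UNIV. u r w * cnj (u r w'))"
    using psd_on_gram[OF finite_UNIV] by (metis UNIV_I)
  have "lin_on UNIV (pre_channel \<phi> \<tau>)"
    unfolding lin_on_def
    by (auto simp: fun_eq_iff pre_channel_def pre_J1_def pre_J0_def Let_def algebra_simps
        lin_on_UNIV_add[OF lin_on_compress[OF \<phi>]] lin_on_UNIV_add[OF lin_on_id_tensor_J0])
  moreover have "supp_on (UNIV \<times> {..<Suc (card (UNIV :: ('w \<times> 'a) set))}) (pre_channel \<phi> \<tau> X)"
    for X
    by (auto simp: supp_on_def pre_channel_def pre_J1_def pre_J0_def Let_def)
  moreover have "psd_on (E \<times> {..<k}) (tensor_id k (pre_channel \<phi> \<tau>) Z)"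
    if "psd_on (UNIV \<times> {..<k}) Z" for E k Z
    unfolding pre_channel_def tensor_id_add
    by (intro psd_on_add psd_on_tensor_id_pre_J1[OF \<phi> that] psd_on_tensor_id_pre_J0[OF u that])
  ultimately show ?thesis
    using trace_pre_channel[OF \<phi>] \<tau> unfolding channel_on_def density_def by auto
qed

lemma trace_J0_register:
  "trace_on UNIV (J0_register Z :: ('w::finite \<times> 'a::finite) op)
    = (\<Sum>y\<in>UNIV. \<Sum>\<alpha><card (UNIV :: ('w \<times> 'a) set). Z (y, \<alpha>) (y, \<alpha>))"
proof -
  have "trace_on UNIV (J0_register Z :: ('w \<times> 'a) op)
      = (\<Sum>y\<in>UNIV. \<Sum>p\<in>UNIV. Z (y, basis_index (p :: 'w \<times> 'a)) (y, basis_index p))"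
    unfolding trace_on_def J0_register_def by (rule sum.swap)
  then show ?thesis
    by (simp add: sum_basis_index[where f = "\<lambda>\<alpha>. Z (_, \<alpha>) (_, \<alpha>)"])
qed

lemma psd_on_tensor_id_J0_register:
  fixes Z :: "(('y::finite \<times> nat) \<times> nat) op"
  assumes "psd_on ((UNIV \<times> {..<Suc (card (UNIV :: ('w \<times> 'a) set))}) \<times> {..<k}) Z"
  shows "psd_on (UNIV \<times> {..<k})
    (tensor_id k (J0_register :: _ \<Rightarrow> ('w::finite \<times> 'a::finite) op) Z)"
  by (rule psd_on_tensor_id_kraus[where A = UNIV
        and B = "{..<Suc (card (UNIV :: ('w \<times> 'a) set))}" and R = UNIV
        and g = "\<lambda>r _. r" and L = "\<lambda>_ p \<beta>. if \<beta> = basis_index p then 1 else 0"])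
    (use assms in \<open>auto simp: J0_register_def less_SucI if_distrib[of "\<lambda>x. x * _"]
      if_distrib[of "\<lambda>x. _ * x"] if_distrib[of cnj] simp del: sum.lessThan_Suc cong: if_cong\<close>)

lemma post_channel_channel:
  fixes \<Gamma> :: "('w::finite \<times> 'a::finite) op \<Rightarrow> ('y::finite) op"
  assumes \<Gamma>: "is_channel \<Gamma>"
  shows "channel_on (UNIV \<times> {..<Suc (card (UNIV :: ('w \<times> 'a) set))}) UNIV (post_channel \<Gamma>)"
proof -
  let ?n = "card (UNIV :: ('w \<times> 'a) set)"
  have post: "post_channel \<Gamma> = (\<lambda>Z y y'. Z (y, ?n) (y', ?n) + \<Gamma> (J0_register Z) y y')"
    by (simp add: fun_eq_iff post_channel_def Let_def)
  have J0_register_lin: "J0_register (\<lambda>i j. A i j + c * B i j)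
      = (\<lambda>i j. J0_register A i j + c * J0_register B i j)" for A B c
    by (simp add: fun_eq_iff J0_register_def sum.distrib sum_distrib_left)
  have "lin_on (UNIV \<times> {..<Suc ?n}) (post_channel \<Gamma>)"
    unfolding lin_on_def post J0_register_lin lin_on_UNIV_add[OF channel_on_UNIV_D(1)[OF \<Gamma>]]
    by (simp add: fun_eq_iff algebra_simps)
  moreover have "trace_on UNIV (post_channel \<Gamma> Z) = trace_on (UNIV \<times> {..<Suc ?n}) Z" for Z
    unfolding post trace_on_add channel_on_UNIV_D(2)[OF \<Gamma>] trace_J0_register
    by (simp add: trace_on_def sum.cartesian_product' lessThan_Suc sum.distrib)
  moreover have "psd_on (UNIV \<times> {..<k}) (tensor_id k (post_channel \<Gamma>) Z)"
    if Z: "psd_on ((UNIV \<times> {..<Suc ?n}) \<times> {..<k}) Z" for k Z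
  proof -
    have "psd_on (UNIV \<times> {..<k}) (tensor_id k (\<lambda>Z y y'. Z (y, ?n) (y', ?n)) Z)"
      by (rule psd_on_tensor_id_kraus[where A = UNIV and B = "{..<Suc ?n}"
            and R = "UNIV :: unit set"
            and g = "\<lambda>_ e. e" and L = "\<lambda>_ _ \<beta>. if \<beta> = ?n then 1 else 0"])
        (use Z in \<open>auto simp: if_distrib[of "\<lambda>x. x * _"] if_distrib[of cnj] cong: if_cong\<close>)
    moreover have "psd_on (UNIV \<times> {..<k}) (tensor_id k (\<lambda>Z. \<Gamma> (J0_register Z)) Z)"
      by (rule psd_on_tensor_id_comp[OF \<Gamma> psd_on_tensor_id_J0_register[OF Z]])
    ultimately show ?thesis
      unfolding post tensor_id_add by (rule psd_on_add)
  qed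
  ultimately show ?thesis
    unfolding channel_on_def by simp
qed

lemma Rmap_eq_post_pre:
  fixes \<phi> :: "'a::finite \<Rightarrow> complex" and \<Gamma> :: "('w::finite \<times> 'a) op \<Rightarrow> ('y::finite) op"
    and N :: "'w op \<Rightarrow> 'y op"
  assumes \<Gamma>: "is_channel \<Gamma>" and N: "lin_on UNIV N"
  shows "Rmap \<phi> \<Gamma> \<tau> N =
    (\<lambda>X. post_channel \<Gamma> (tensor_id (Suc (card (UNIV :: ('w \<times> 'a) set))) N (pre_channel \<phi> \<tau> X)))"
proof
  fix X
  let ?n = "card (UNIV :: ('w \<times> 'a) set)"
  let ?Z = "tensor_id (Suc ?n) N (pre_channel \<phi> \<tau> X)"
  have "(\<lambda>w w'. pre_channel \<phi> \<tau> X (w, ?n) (w', ?n)) = compress \<phi> X"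
    by (simp add: fun_eq_iff pre_channel_def pre_J1_def pre_J0_def Let_def)
  then have J1_block: "?Z (y, ?n) (y', ?n) = N (compress \<phi> X) y y'" for y y'
    by (simp add: tensor_id_def)
  have "(\<lambda>w w'. pre_channel \<phi> \<tau> X (w, basis_index p) (w', basis_index p'))
      = (\<lambda>w w'. id_tensor (J0 \<phi>) X p p' * \<tau> w w')" for p p' :: "'w \<times> 'a"
    by (simp add: fun_eq_iff pre_channel_def pre_J1_def pre_J0_def Let_def mult.commute)
  then have "J0_register ?Z = (\<lambda>p p'. id_tensor (J0 \<phi>) X p p' * trace_on UNIV (N \<tau>))"
    by (simp add: fun_eq_iff J0_register_def tensor_id_def less_SucI lin_on_UNIV_scale[OF N]
        trace_on_def sum_distrib_left)
  then show "Rmap \<phi> \<Gamma> \<tau> N X = post_channel \<Gamma> ?Z"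
    by (simp add: Rmap_def post_channel_def Let_def J1_block
        mult.commute[of _ "trace_on UNIV (N \<tau>)"]
        lin_on_UNIV_scale[OF channel_on_UNIV_D(1)[OF \<Gamma>]])
qed

lemma Rmap_superchannel:
  fixes \<phi> :: "'a::finite \<Rightarrow> complex" and \<Gamma> :: "('w::finite \<times> 'a) op \<Rightarrow> ('y::finite) op"
  assumes "unit_vec \<phi>" "is_channel \<Gamma>" "density \<tau>"
  shows "is_superchannel (Rmap \<phi> \<Gamma> \<tau>)"
  unfolding is_superchannel_def
  using Rmap_channel[OF assms] pre_channel_channel[OF assms(1,3)] post_channel_channel[OF assms(2)]
    Rmap_eq_post_pre[OF assms(2)] by blast

theorem mainTheorem2:
  fixes \<phi> :: "'a::finite \<Rightarrow> complex"
    and \<Gamma> :: "('w::finite \<times> 'a) op \<Rightarrow> ('y::finite) op"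
    and \<tau> :: "'w op"
  assumes "unit_vec \<phi>"
    and "is_channel \<Gamma>"
    and "density \<tau>"
  shows "is_superchannel (Rmap \<phi> \<Gamma> \<tau>)
         \<and> ((\<lambda>X. \<Gamma> (id_tensor (Jmap \<phi>) X)) = \<Gamma> \<longrightarrow> Rmap \<phi> \<Gamma> \<tau> (S3 \<phi> \<Gamma>) = \<Gamma>)"
proof (intro conjI impI)
  show "is_superchannel (Rmap \<phi> \<Gamma> \<tau>)"
    by (rule Rmap_superchannel[OF assms])
next
  assume "(\<lambda>X. \<Gamma> (id_tensor (Jmap \<phi>) X)) = \<Gamma>"
  then show "Rmap \<phi> \<Gamma> \<tau> (S3 \<phi> \<Gamma>) = \<Gamma>"
    by (rule Rmap_S3[OF assms])
qed

end
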